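(* Let $\mathcal{G}=(\mathcal{N},\mathcal{P})$ be a connected directed graph with nodes $\mathcal{N}=\{1,\dots,N\}$, edges $\mathcal{P}$ written $\ell=(m,n)$, and edge-node incidence matrix $\mathbf{A}\in\mathbb{R}^{P\times N}$ ($A_{\ell,m}=+1$, $A_{\ell,n}=-1$ for $\ell=(m,n)$, zeros elsewhere in row $\ell$). The edges are partitioned into compressors $\mathcal{P}_a$ and lossy pipes $\bar{\mathcal{P}}_a=\mathcal{P}\setminus\mathcal{P}_a$. Assume (A1) no compressor edge belongs to a cycle of $\mathcal{G}$, and (A2) every edge of $\mathcal{G}$ belongs to at most one cycle. Fix a reference node $r$ with given value $\psi_r$, injections $\mathbf{q}\in\mathbb{R}^N$ with $\mathbf{1}^\top\mathbf{q}=0$, $a_\ell>0$ for $\ell\in\bar{\mathcal{P}}_a$, and $\alpha_\ell>0$ for $\ell\in\mathcal{P}_a$. Problem (G1): find $(\boldsymbol{\phi},\boldsymbol{\psi})\in\mathbb{R}^P\times\mathbb{R}^N$ with the given $\psi_r$ such that $\mathbf{A}^\top\boldsymbol{\phi}=\mathbf{q}$; $\psi_m-\psi_n=a_\ell\,\mathrm{sign}(\phi_\ell)\phi_\ell^2$ for all $\ell=(m,n)\in\bar{\mathcal{P}}_a$; $\psi_n\ge0$ for all $n\in\mathcal{N}$; and $\psi_n=\alpha_\ell\psi_m$, $\phi_\ell\ge0$ for all $\ell=(m,n)\in\mathcal{P}_a$. Problem (G2), for a constant $M>0$: minimize $r(\boldsymbol{\psi}):=\sum_{(m,n)\in\bar{\mathcal{P}}_a}|\psi_m-\psi_n|$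 over $\boldsymbol{\phi}\in\mathbb{R}^P$, $\boldsymbol{\psi}\in\mathbb{R}^N$ (with the given $\psi_r$) and $\mathbf{x}\in\{0,1\}^{\bar{\mathcal{P}}_a}$, subject to $\mathbf{A}^\top\boldsymbol{\phi}=\mathbf{q}$; $\psi_n=\alpha_\ell\psi_m$ and $\phi_\ell\ge0$ for all $\ell=(m,n)\in\mathcal{P}_a$; and, for every $\ell=(m,n)\in\bar{\mathcal{P}}_a$: $-M(1-x_\ell)\le\phi_\ell\le Mx_\ell$, $-M(1-x_\ell)\le\psi_m-\psi_n-a_\ell\phi_\ell^2$, and $\psi_m-\psi_n+a_\ell\phi_\ell^2\le Mx_\ell$. If (G1) is feasible, then for $M$ sufficiently large, for every minimizer $(\boldsymbol{\phi},\boldsymbol{\psi},\mathbf{x})$ of (G2), the pair $(\boldsymbol{\phi},\boldsymbol{\psi})$ solves (G1).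
   Context: $\mathrm{sign}(x)=+1$ for $x>0$, $-1$ for $x<0$, $0$ for $x=0$. A cycle is a closed path in the underlying undirected graph with no repeated edges or nodes. $M$ is a "big-M" constant, which the paper takes to be large. *)

theory Defs
  imports Main "HOL-Analysis.Analysis"
begin

text \<open>A directed multigraph: nodes of finite type 'n, edges of finite type 'e,
  edge l = (src l, dst l).\<close>

definition incidence :: "('e \<Rightarrow> 'n) \<Rightarrow> ('e \<Rightarrow> 'n) \<Rightarrow> 'e \<Rightarrow> 'n \<Rightarrow> real" where
  "incidence src dst l v = (if v = src l then 1 else if v = dst l then -1 else 0)"

definition incT :: "('e::finite \<Rightarrow> 'n) \<Rightarrow> ('e \<Rightarrow> 'n) \<Rightarrow> ('e \<Rightarrow> real) \<Rightarrow> 'n \<Rightarrow> real" where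
  "incT src dst phi v = (\<Sum>l\<in>UNIV. incidence src dst l v * phi l)"

definition joins :: "('e \<Rightarrow> 'n) \<Rightarrow> ('e \<Rightarrow> 'n) \<Rightarrow> 'e \<Rightarrow> 'n \<Rightarrow> 'n \<Rightarrow> bool" where
  "joins src dst l u v \<longleftrightarrow> (src l = u \<and> dst l = v) \<or> (src l = v \<and> dst l = u)"

definition connected_graph :: "('e \<Rightarrow> 'n) \<Rightarrow> ('e \<Rightarrow> 'n) \<Rightarrow> bool" where
  "connected_graph src dst \<longleftrightarrow>
     (\<forall>u v. (u, v) \<in> {(a, b). \<exists>l. joins src dst l a b}\<^sup>*)"

definition is_cycle :: "('e \<Rightarrow> 'n) \<Rightarrow> ('e \<Rightarrow> 'n) \<Rightarrow> 'e list \<Rightarrow> 'n list \<Rightarrow> bool" where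
  "is_cycle src dst es vs \<longleftrightarrow>
     length es = length vs \<and> length es \<ge> 2 \<and> distinct es \<and> distinct vs \<and>
     (\<forall>i < length es. joins src dst (es ! i) (vs ! i) (vs ! ((i + 1) mod length es)))"

definition cycle_edge_set :: "('e \<Rightarrow> 'n) \<Rightarrow> ('e \<Rightarrow> 'n) \<Rightarrow> 'e set \<Rightarrow> bool" where
  "cycle_edge_set src dst C \<longleftrightarrow> (\<exists>es vs. is_cycle src dst es vs \<and> C = set es)"

text \<open>Problem (G1) feasibility of (phi, psi).  Pa = compressors, -Pa = lossy pipes.\<close>
definition G1 :: "('e::finite \<Rightarrow> 'n) \<Rightarrow> ('e \<Rightarrow> 'n) \<Rightarrow> 'e set \<Rightarrow> 'n \<Rightarrow> real \<Rightarrow> ('n \<Rightarrow> real)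
    \<Rightarrow> ('e \<Rightarrow> real) \<Rightarrow> ('e \<Rightarrow> real) \<Rightarrow> ('e \<Rightarrow> real) \<Rightarrow> ('n \<Rightarrow> real) \<Rightarrow> bool" where
  "G1 src dst Pa r psi_r q a alpha phi psi \<longleftrightarrow>
     psi r = psi_r \<and>
     (\<forall>v. incT src dst phi v = q v) \<and>
     (\<forall>l. l \<notin> Pa \<longrightarrow> psi (src l) - psi (dst l) = a l * sgn (phi l) * (phi l)\<^sup>2) \<and>
     (\<forall>v. psi v \<ge> 0) \<and>
     (\<forall>l\<in>Pa. psi (dst l) = alpha l * psi (src l) \<and> phi l \<ge> 0)"

text \<open>Feasible set of Problem (G2) with big-M constant M; x is relevant only on pipes.\<close>
definition G2_feasible :: "('e::finite \<Rightarrow> 'n) \<Rightarrow> ('e \<Rightarrow> 'n) \<Rightarrow> 'e set \<Rightarrow> 'n \<Rightarrow> real \<Rightarrow> ('n \<Rightarrow> real)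
    \<Rightarrow> ('e \<Rightarrow> real) \<Rightarrow> ('e \<Rightarrow> real) \<Rightarrow> real
    \<Rightarrow> ('e \<Rightarrow> real) \<Rightarrow> ('n \<Rightarrow> real) \<Rightarrow> ('e \<Rightarrow> bool) \<Rightarrow> bool" where
  "G2_feasible src dst Pa r psi_r q a alpha M phi psi x \<longleftrightarrow>
     psi r = psi_r \<and>
     (\<forall>v. incT src dst phi v = q v) \<and>
     (\<forall>l\<in>Pa. psi (dst l) = alpha l * psi (src l) \<and> phi l \<ge> 0) \<and>
     (\<forall>l. l \<notin> Pa \<longrightarrow>
        - M * (1 - of_bool (x l)) \<le> phi l \<and> phi l \<le> M * of_bool (x l) \<and>
        - M * (1 - of_bool (x l)) \<le> psi (src l) - psi (dst l) - a l * (phi l)\<^sup>2 \<and>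
        psi (src l) - psi (dst l) + a l * (phi l)\<^sup>2 \<le> M * of_bool (x l))"

definition G2_obj :: "('e::finite \<Rightarrow> 'n) \<Rightarrow> ('e \<Rightarrow> 'n) \<Rightarrow> 'e set \<Rightarrow> ('n \<Rightarrow> real) \<Rightarrow> real" where
  "G2_obj src dst Pa psi = (\<Sum>l\<in>- Pa. \<bar>psi (src l) - psi (dst l)\<bar>)"

definition G2_minimizer where
  "G2_minimizer src dst Pa r psi_r q a alpha M phi psi x \<longleftrightarrow>
     G2_feasible src dst Pa r psi_r q a alpha M phi psi x \<and>
     (\<forall>phi' psi' x'. G2_feasible src dst Pa r psi_r q a alpha M phi' psi' x' \<longrightarrow>
        G2_obj src dst Pa psi \<le> G2_obj src dst Pa psi')"

end

theory Submission
  imports Defs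
begin

(* Fix a solution (phis, psis) of (G1); for M large it is feasible for (G2) with
   x l = (phis l >= 0). The big-M constraints of a minimiser (phi, psi, x) say that on every pipe
   the drop d = psi m - psi n satisfies d >= a phi^2 with phi >= 0, or d <= - a phi^2 with
   phi <= 0. The difference phi - phis is a circulation: it vanishes on edges lying on no cycle,
   and by (A2) it is a constant t around each cycle (relative to the cycle's orientation). Since
   the drops around a cycle sum to zero, monotonicity of f |-> a sgn(f) f^2 shows that the total
   absolute drop of psi along a cycle is at least that of psis, strictly so if t <> 0; on an edge
   on no cycle the flow is phis and |d| is at least the exact drop, with equality only for the
   exact drop. Minimality therefore forces phi = phis and equal drops on all pipes; the compressor
   equations and connectivity then give psi = psis. *)

definition adj_avoiding :: "('e \<Rightarrow> 'n) \<Rightarrow> ('e \<Rightarrow> 'n) \<Rightarrow> 'e set \<Rightarrow> ('n \<times> 'n) set" where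
  "adj_avoiding src dst F = {(u, v). \<exists>l. l \<notin> F \<and> joins src dst l u v}"

definition on_cycle :: "('e \<Rightarrow> 'n) \<Rightarrow> ('e \<Rightarrow> 'n) \<Rightarrow> 'e \<Rightarrow> bool" where
  "on_cycle src dst l \<longleftrightarrow> (\<exists>C. cycle_edge_set src dst C \<and> l \<in> C)"

definition circulation :: "('e::finite \<Rightarrow> 'n) \<Rightarrow> ('e \<Rightarrow> 'n) \<Rightarrow> ('e \<Rightarrow> real) \<Rightarrow> bool" where
  "circulation src dst g \<longleftrightarrow> (\<forall>v. incT src dst g v = 0)"

lemma joins_sym: "joins src dst l u v \<longleftrightarrow> joins src dst l v u"
  unfolding joins_def by auto

lemma joins_ends_unique:
  assumes "joins src dst l u v" "joins src dst l u' v'"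
  shows "(u = u' \<and> v = v') \<or> (u = v' \<and> v = u')"
  using assms unfolding joins_def by auto

lemma adj_avoiding_closed:
  assumes "l \<notin> F"
  shows "(u, src l) \<in> (adj_avoiding src dst F)\<^sup>* \<longleftrightarrow> (u, dst l) \<in> (adj_avoiding src dst F)\<^sup>*"
proof -
  have "(src l, dst l) \<in> adj_avoiding src dst F" "(dst l, src l) \<in> adj_avoiding src dst F"
    using assms unfolding adj_avoiding_def joins_def by auto
  then show ?thesis by (auto intro: rtrancl_into_rtrancl)
qed

lemma simple_path_avoiding:
  assumes "(u, v) \<in> (adj_avoiding src dst F)\<^sup>*"
  shows "\<exists>ps es. length ps = Suc (length es) \<and> ps ! 0 = u \<and> ps ! length es = v \<and> distinct ps \<and>
     (\<forall>i < length es. joins src dst (es ! i) (ps ! i) (ps ! Suc i) \<and> es ! i \<notin> F)"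
  using assms
proof (induction rule: converse_rtrancl_induct)
  case base
  show ?case by (rule exI[of _ "[v]"], rule exI[of _ "[]"]) auto
next
  case (step y z)
  from step.IH obtain ps es where P: "length ps = Suc (length es)" "ps ! 0 = z"
    "ps ! length es = v" "distinct ps"
    "\<forall>i < length es. joins src dst (es ! i) (ps ! i) (ps ! Suc i) \<and> es ! i \<notin> F"
    by blast
  from step.hyps(1) obtain l where l: "l \<notin> F" "joins src dst l y z"
    by (auto simp: adj_avoiding_def)
  show ?case
  proof (cases "y \<in> set ps")
    case True
    \<comment> \<open>shortcut: restart the path at the earlier visit of y\<close>
    then obtain n where n: "n < length ps" "ps ! n = y" by (auto simp: in_set_conv_nth)
    show ?thesis
    proof (rule exI[of _ "drop n ps"], rule exI[of _ "drop n es"], intro conjI allI impI)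
      fix i assume "i < length (drop n es)"
      then have "n + i < length es" by auto
      then show "joins src dst (drop n es ! i) (drop n ps ! i) (drop n ps ! Suc i)"
        and "drop n es ! i \<notin> F"
        using P n by auto
    qed (use P n in auto)
  next
    case False
    show ?thesis
      by (rule exI[of _ "y # ps"], rule exI[of _ "l # es"])
        (use P l False in \<open>auto simp: nth_Cons split: nat.split\<close>)
  qed
qed

lemma path_closing_edge_cycle:
  assumes path: "(u, v) \<in> (adj_avoiding src dst F)\<^sup>*" and "u \<noteq> v"
    and closing: "joins src dst l v u" "l \<in> F"
  shows "\<exists>es vs. is_cycle src dst es vs \<and> l \<in> set es \<and> (\<forall>e \<in> set es. e = l \<or> e \<notin> F)"
proof -
  obtain ps es where P: "length ps = Suc (length es)" "ps ! 0 = u" "ps ! length es = v"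
    "distinct ps" "\<forall>i < length es. joins src dst (es ! i) (ps ! i) (ps ! Suc i) \<and> es ! i \<notin> F"
    using simple_path_avoiding[OF path] by blast
  have "es \<noteq> []" using P \<open>u \<noteq> v\<close> by auto
  have "distinct es"
    unfolding distinct_conv_nth
  proof (intro allI impI notI)
    fix i j assume ij: "i < length es" "j < length es" "i \<noteq> j" and eq: "es ! i = es ! j"
    have "(ps ! i = ps ! j \<and> ps ! Suc i = ps ! Suc j) \<or> (ps ! i = ps ! Suc j \<and> ps ! Suc i = ps ! j)"
      using joins_ends_unique P(5) ij eq by metis
    then show False using P(1,4) ij by (auto simp: nth_eq_iff_index_eq)
  qed
  moreover have "l \<notin> set es" using P(5) closing(2) by (auto simp: in_set_conv_nth)
  ultimately have "is_cycle src dst (es @ [l]) ps"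
    unfolding is_cycle_def
  proof (intro conjI allI impI)
    fix i assume "i < length (es @ [l])"
    then consider "i < length es" | "i = length es" by fastforce
    then show "joins src dst ((es @ [l]) ! i) (ps ! i) (ps ! ((i + 1) mod length (es @ [l])))"
      by cases (use P closing(1) in \<open>auto simp: nth_append\<close>)
  qed (use P \<open>es \<noteq> []\<close> in \<open>auto simp: Suc_le_eq\<close>)
  then show ?thesis
    using P(5) by (intro exI[of _ "es @ [l]"] exI[of _ ps]) (auto simp: in_set_conv_nth)
qed

lemma circulation_cut_sum:
  fixes g :: "'e::finite \<Rightarrow> real" and src dst :: "'e \<Rightarrow> 'n::finite"
  assumes no_loops: "\<And>l. src l \<noteq> dst l" and "circulation src dst g"
    and closed: "\<And>l. l \<notin> F \<Longrightarrow> src l \<in> S \<longleftrightarrow> dst l \<in> S"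
  shows "(\<Sum>l\<in>F. g l * (of_bool (src l \<in> S) - of_bool (dst l \<in> S))) = 0"
proof -
  have "(\<Sum>v\<in>S. incidence src dst l v * g l) = g l * (of_bool (src l \<in> S) - of_bool (dst l \<in> S))"
    for l
  proof -
    have "incidence src dst l v = (if v = src l then 1 else 0) - (if v = dst l then 1 else 0)" for v
      using no_loops[of l] by (auto simp: incidence_def)
    then have "(\<Sum>v\<in>S. incidence src dst l v) = of_bool (src l \<in> S) - of_bool (dst l \<in> S)"
      by (simp only:) (simp add: sum_subtractf)
    then show ?thesis by (metis mult.commute sum_distrib_right)
  qed
  then have "(\<Sum>l\<in>UNIV. g l * (of_bool (src l \<in> S) - of_bool (dst l \<in> S)))
      = (\<Sum>l\<in>UNIV. \<Sum>v\<in>S. incidence src dst l v * g l)"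
    by simp
  also have "\<dots> = (\<Sum>v\<in>S. incT src dst g v)"
    unfolding incT_def by (rule sum.swap)
  also have "\<dots> = 0"
    using \<open>circulation src dst g\<close> by (simp add: circulation_def)
  finally show ?thesis
    by (subst sum.mono_neutral_left[of UNIV F]) (auto simp: closed)
qed

lemma circulation_zero_off_cycles:
  fixes g :: "'e::finite \<Rightarrow> real" and src dst :: "'e \<Rightarrow> 'n::finite"
  assumes no_loops: "\<And>l. src l \<noteq> dst l" and "circulation src dst g"
    and "\<not> on_cycle src dst l"
  shows "g l = 0"
proof -
  define S where "S = {v. (src l, v) \<in> (adj_avoiding src dst {l})\<^sup>*}"
  have "dst l \<notin> S"
  proof
    assume "dst l \<in> S"
    then obtain es vs where "is_cycle src dst es vs" "l \<in> set es"
      using path_closing_edge_cycle[of "src l" "dst l" src dst "{l}" l] no_loops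
      by (auto simp: S_def joins_def)
    with \<open>\<not> on_cycle src dst l\<close> show False
      unfolding on_cycle_def cycle_edge_set_def by blast
  qed
  moreover have "src l \<in> S" by (simp add: S_def)
  ultimately show ?thesis
    using circulation_cut_sum[OF no_loops \<open>circulation src dst g\<close>, of "{l}" S]
    by (simp add: S_def adj_avoiding_closed)
qed

lemma is_cycle_joins:
  assumes "is_cycle src dst es vs" "i < length es"
  shows "joins src dst (es ! i) (vs ! i) (vs ! ((i + 1) mod length es))"
  using assms unfolding is_cycle_def by auto

lemma is_cycle_next_neq:
  assumes "is_cycle src dst es vs" "i < length es"
  shows "vs ! i \<noteq> vs ! ((i + 1) mod length es)"
proof -
  have L: "length vs = length es" "2 \<le> length es" "distinct vs"
    using assms(1) unfolding is_cycle_def by auto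
  have "(i + 1) mod length es \<noteq> i"
  proof (cases "i + 1 < length es")
    case False
    then have "i + 1 = length es" using assms(2) by simp
    then show ?thesis using L(2) by simp
  qed simp
  moreover have "(i + 1) mod length es < length es" using L(2) by (intro mod_less_divisor) linarith
  ultimately show ?thesis
    using L assms(2) by (simp add: nth_eq_iff_index_eq)
qed

lemma is_cycle_walk_avoiding:
  assumes "is_cycle src dst es vs" "m + k < length es" "\<And>i. i < k \<Longrightarrow> es ! (m + i) \<notin> F"
  shows "(vs ! m, vs ! (m + k)) \<in> (adj_avoiding src dst F)\<^sup>*"
  using assms(2,3)
proof (induction k)
  case (Suc k)
  then have "joins src dst (es ! (m + k)) (vs ! (m + k)) (vs ! (m + Suc k))" "es ! (m + k) \<notin> F"
    using is_cycle_joins[OF assms(1), of "m + k"] by auto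
  then have "(vs ! (m + k), vs ! (m + Suc k)) \<in> adj_avoiding src dst F"
    unfolding adj_avoiding_def by auto
  with Suc show ?case by (simp add: rtrancl_into_rtrancl)
qed simp

definition orient :: "('e \<Rightarrow> 'n) \<Rightarrow> 'e list \<Rightarrow> 'n list \<Rightarrow> nat \<Rightarrow> real" where
  "orient src es vs i = (if src (es ! i) = vs ! i then 1 else -1)"

lemma orient_cases: "orient src es vs i = 1 \<or> orient src es vs i = -1"
  unfolding orient_def by simp

lemma cut_term_joins:
  fixes g :: "'e \<Rightarrow> real"
  assumes "joins src dst l u w" "u \<in> S" "w \<notin> S"
  shows "g l * (of_bool (src l \<in> S) - of_bool (dst l \<in> S)) = (if src l = u then 1 else -1) * g l"
  using assms unfolding joins_def by auto

lemma is_cycle_last_joins: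
  assumes "is_cycle src dst es vs"
  shows "joins src dst (es ! (length es - 1)) (vs ! (length es - 1)) (vs ! 0)"
proof -
  have "2 \<le> length es" using assms by (simp add: is_cycle_def)
  then have "length es - 1 + 1 = length es" by linarith
  then have "(length es - 1 + 1) mod length es = 0" by simp
  with is_cycle_joins[OF assms, of "length es - 1"] \<open>2 \<le> length es\<close> show ?thesis by simp
qed

lemma cycle_cut_at_two_edges:
  assumes cycles_disjoint: "\<And>l C C'. cycle_edge_set src dst C \<Longrightarrow> l \<in> C \<Longrightarrow>
      cycle_edge_set src dst C' \<Longrightarrow> l \<in> C' \<Longrightarrow> C = C'"
    and cyc: "is_cycle src dst es vs" and j: "j < length es - 1"
  defines "S \<equiv> {v. (vs ! 0, v) \<in> (adj_avoiding src dst {es ! j, es ! (length es - 1)})\<^sup>*}"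
  shows "vs ! j \<in> S" "vs ! (j + 1) \<notin> S" "vs ! (length es - 1) \<notin> S"
proof -
  define K where "K = length es"
  define F where "F = {es ! j, es ! (K - 1)}"
  have S: "S = {v. (vs ! 0, v) \<in> (adj_avoiding src dst F)\<^sup>*}"
    unfolding S_def F_def K_def ..
  have L: "length vs = K" "2 \<le> K" "distinct vs" "distinct es"
    using cyc unfolding K_def is_cycle_def by auto
  have off_F: "es ! i \<notin> F" if "i < K" "i \<noteq> j" "i \<noteq> K - 1" for i
    using that L j K_def by (auto simp: F_def nth_eq_iff_index_eq)
  show "vs ! j \<in> S"
    using is_cycle_walk_avoiding[OF cyc, of 0 j F] off_F j K_def by (simp add: S)
  show "vs ! (K - 1) \<notin> S" unfolding K_def
  proof
    \<comment> \<open>otherwise edge K - 1 would lie on a second cycle, one avoiding edge j\<close>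
    assume "vs ! (length es - 1) \<in> S"
    moreover have "vs ! 0 \<noteq> vs ! (length es - 1)"
    proof -
      have "0 < length vs" "length es - 1 < length vs" "length es - 1 \<noteq> 0"
        using L K_def by linarith+
      then show ?thesis by (simp add: nth_eq_iff_index_eq[OF \<open>distinct vs\<close>])
    qed
    ultimately obtain es' vs' where "is_cycle src dst es' vs'" "es ! (K - 1) \<in> set es'"
        "\<forall>e \<in> set es'. e = es ! (K - 1) \<or> e \<notin> F"
      using path_closing_edge_cycle[of "vs ! 0" "vs ! (K - 1)" src dst F "es ! (K - 1)"]
        is_cycle_last_joins[OF cyc] K_def by (auto simp: S F_def joins_sym)
    moreover have "set es' = set es"
      using cycles_disjoint[of "set es'" "es ! (K - 1)" "set es"] calculation cyc L K_def
      unfolding cycle_edge_set_def by auto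
    moreover have "es ! j \<in> set es" "es ! j \<noteq> es ! (K - 1)"
      using j L K_def by (auto simp: nth_eq_iff_index_eq)
    ultimately show False by (auto simp: F_def K_def)
  qed
  moreover have "(vs ! (j + 1), vs ! (K - 1)) \<in> (adj_avoiding src dst F)\<^sup>*"
  proof -
    have "j + 1 + (K - 1 - (j + 1)) = K - 1" using j K_def by simp
    moreover have "(vs ! (j + 1), vs ! (j + 1 + (K - 1 - (j + 1)))) \<in> (adj_avoiding src dst F)\<^sup>*"
      by (rule is_cycle_walk_avoiding[OF cyc]) (use off_F j L K_def in auto)
    ultimately show ?thesis by (simp only:)
  qed
  ultimately show "vs ! (j + 1) \<notin> S"
    unfolding S mem_Collect_eq K_def by (meson rtrancl_trans)
qed

lemma circulation_constant_on_cycle: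
  fixes g :: "'e::finite \<Rightarrow> real" and src dst :: "'e \<Rightarrow> 'n::finite"
  assumes no_loops: "\<And>l. src l \<noteq> dst l" and circ: "circulation src dst g"
    and cycles_disjoint: "\<And>l C C'. cycle_edge_set src dst C \<Longrightarrow> l \<in> C \<Longrightarrow>
      cycle_edge_set src dst C' \<Longrightarrow> l \<in> C' \<Longrightarrow> C = C'"
    and cyc: "is_cycle src dst es vs" and j: "j < length es"
  shows "orient src es vs j * g (es ! j) = orient src es vs (length es - 1) * g (es ! (length es - 1))"
proof (cases "j = length es - 1")
  case False
  define K where "K = length es"
  have "j < K - 1" using False j K_def by auto
  \<comment> \<open>only the edges j and K - 1 leave S, so the flows they carry out of S cancel\<close>
  define F where "F = {es ! j, es ! (K - 1)}"
  define S where "S = {v. (vs ! 0, v) \<in> (adj_avoiding src dst F)\<^sup>*}"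
  have "vs ! j \<in> S" "vs ! (j + 1) \<notin> S" "vs ! (K - 1) \<notin> S"
    using cycle_cut_at_two_edges[OF cycles_disjoint cyc, where j = j] \<open>j < K - 1\<close>
    unfolding F_def S_def K_def by simp_all
  have "vs ! 0 \<in> S" by (simp add: S_def)
  have last_joins: "joins src dst (es ! (K - 1)) (vs ! (K - 1)) (vs ! 0)"
    using is_cycle_last_joins[OF cyc] K_def by simp
  have j_joins: "joins src dst (es ! j) (vs ! j) (vs ! (j + 1))"
    using is_cycle_joins[OF cyc j] \<open>j < K - 1\<close> K_def by simp
  have "distinct es" using cyc by (simp add: is_cycle_def)
  then have "es ! j \<noteq> es ! (K - 1)"
    using \<open>j < K - 1\<close> K_def by (simp add: nth_eq_iff_index_eq)
  moreover have "(\<Sum>l\<in>F. g l * (of_bool (src l \<in> S) - of_bool (dst l \<in> S))) = 0"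
    by (rule circulation_cut_sum[OF no_loops circ]) (simp add: S_def adj_avoiding_closed)
  ultimately have "g (es ! j) * (of_bool (src (es ! j) \<in> S) - of_bool (dst (es ! j) \<in> S))
      + g (es ! (K - 1)) * (of_bool (src (es ! (K - 1)) \<in> S) - of_bool (dst (es ! (K - 1)) \<in> S)) = 0"
    by (simp add: F_def)
  then have "orient src es vs j * g (es ! j)
      + (if src (es ! (K - 1)) = vs ! 0 then 1 else -1) * g (es ! (K - 1)) = 0"
    unfolding orient_def
      cut_term_joins[OF j_joins \<open>vs ! j \<in> S\<close> \<open>vs ! (j + 1) \<notin> S\<close>]
      cut_term_joins[OF joins_sym[THEN iffD1, OF last_joins] \<open>vs ! 0 \<in> S\<close> \<open>vs ! (K - 1) \<notin> S\<close>] .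
  moreover have "(if src (es ! (K - 1)) = vs ! 0 then 1 else -1) = - orient src es vs (K - 1)"
    using last_joins \<open>vs ! 0 \<in> S\<close> \<open>vs ! (K - 1) \<notin> S\<close> by (auto simp: joins_def orient_def)
  ultimately show ?thesis by (simp add: K_def)
qed simp

lemma sum_lessThan_rotate:
  fixes h :: "nat \<Rightarrow> 'a::comm_monoid_add"
  assumes "0 < k"
  shows "(\<Sum>i<k. h ((i + 1) mod k)) = (\<Sum>i<k. h i)"
proof -
  obtain n where n: "k = Suc n" using assms by (cases k) auto
  have "(\<Sum>i<Suc n. h ((i + 1) mod Suc n)) = (\<Sum>i<n. h (Suc i)) + h 0"
    by (simp add: sum.cong[OF refl, of "{..<n}" "\<lambda>i. h ((i + 1) mod Suc n)"])
  also have "\<dots> = (\<Sum>i<Suc n. h i)"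
    by (subst sum.lessThan_Suc_shift) (simp add: add.commute)
  finally show ?thesis using n by simp
qed

lemma orient_edge_diff:
  assumes "is_cycle src dst es vs" "i < length es"
  shows "orient src es vs i * (p (src (es ! i)) - p (dst (es ! i)))
    = p (vs ! i) - p (vs ! ((i + 1) mod length es))"
  using is_cycle_joins[OF assms] is_cycle_next_neq[OF assms]
  by (auto simp: orient_def joins_def)

lemma cycle_oriented_diff_sum:
  fixes p :: "'n \<Rightarrow> real"
  assumes "is_cycle src dst es vs"
  shows "(\<Sum>i<length es. orient src es vs i * (p (src (es ! i)) - p (dst (es ! i)))) = 0"
proof -
  have "0 < length es" using assms by (auto simp: is_cycle_def)
  then have "(\<Sum>i<length es. p (vs ! ((i + 1) mod length es))) = (\<Sum>i<length es. p (vs ! i))"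
    by (rule sum_lessThan_rotate)
  then show ?thesis
    by (simp add: orient_edge_diff[OF assms] sum_subtractf)
qed

lemma cycle_sum_abs_oriented:
  fixes h :: "'e \<Rightarrow> real"
  assumes "is_cycle src dst es vs"
  shows "(\<Sum>l\<in>set es. \<bar>h l\<bar>) = (\<Sum>i<length es. \<bar>orient src es vs i * h (es ! i)\<bar>)"
proof -
  have "distinct es" using assms by (simp add: is_cycle_def)
  then have "(\<Sum>l\<in>set es. \<bar>h l\<bar>) = (\<Sum>i<length es. \<bar>h (es ! i)\<bar>)"
    using sum.reindex_bij_betw[OF bij_betw_nth[OF _ refl refl], of es "\<lambda>l. \<bar>h l\<bar>"] by simp
  also have "\<dots> = (\<Sum>i<length es. \<bar>orient src es vs i * h (es ! i)\<bar>)"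
    by (intro sum.cong refl) (simp add: abs_mult orient_def)
  finally show ?thesis .
qed

definition pipe_law_relaxed :: "real \<Rightarrow> real \<Rightarrow> real \<Rightarrow> bool" where
  "pipe_law_relaxed c f d \<longleftrightarrow> (0 \<le> f \<and> c * f\<^sup>2 \<le> d) \<or> (f \<le> 0 \<and> d \<le> - (c * f\<^sup>2))"

definition big_M_pipe :: "real \<Rightarrow> bool \<Rightarrow> real \<Rightarrow> real \<Rightarrow> real \<Rightarrow> bool" where
  "big_M_pipe M x c f d \<longleftrightarrow>
     - M * (1 - of_bool x) \<le> f \<and> f \<le> M * of_bool x \<and>
     - M * (1 - of_bool x) \<le> d - c * f\<^sup>2 \<and> d + c * f\<^sup>2 \<le> M * of_bool x"

lemma big_M_pipe_imp_relaxed: "big_M_pipe M x c f d \<Longrightarrow> pipe_law_relaxed c f d"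
  by (cases x) (auto simp: big_M_pipe_def pipe_law_relaxed_def)

lemma pipe_law_imp_big_M_pipe:
  assumes "0 \<le> c" "\<bar>f\<bar> + 2 * c * f\<^sup>2 \<le> M" "d = c * sgn f * f\<^sup>2"
  shows "big_M_pipe M (0 \<le> f) c f d"
proof -
  define p where "p = c * f\<^sup>2"
  have "0 \<le> p" "\<bar>f\<bar> + 2 * p \<le> M" "d = sgn f * p" "f = 0 \<Longrightarrow> p = 0"
    using assms by (simp_all add: p_def mult.assoc mult.left_commute)
  then show ?thesis
    unfolding big_M_pipe_def p_def[symmetric]
    by (cases f "0 :: real" rule: linorder_cases) auto
qed

lemma pipe_law_relaxed_sign:
  assumes "s = 1 \<or> s = -1"
  shows "pipe_law_relaxed c (s * f) (s * d) \<longleftrightarrow> pipe_law_relaxed c f d"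
  using assms by (auto simp: pipe_law_relaxed_def)

lemma pipe_law_relaxed_dominates:
  assumes "0 \<le> c" "pipe_law_relaxed c f d"
  shows "\<bar>c * sgn f * f\<^sup>2\<bar> \<le> \<bar>d\<bar>"
    and "\<bar>c * sgn f * f\<^sup>2\<bar> = \<bar>d\<bar> \<Longrightarrow> d = c * sgn f * f\<^sup>2"
proof -
  have "0 \<le> c * f\<^sup>2" using assms(1) by simp
  then show "\<bar>c * sgn f * f\<^sup>2\<bar> \<le> \<bar>d\<bar>" "\<bar>c * sgn f * f\<^sup>2\<bar> = \<bar>d\<bar> \<Longrightarrow> d = c * sgn f * f\<^sup>2"
    using assms(2) by (cases f "0 :: real" rule: linorder_cases; auto simp: pipe_law_relaxed_def)+
qed

lemma pos_part_pipe_law_mono: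
  assumes "0 \<le> c" "fs \<le> f" "pipe_law_relaxed c f d"
  shows "max (c * sgn fs * fs\<^sup>2) 0 \<le> max d 0"
proof (cases "0 < fs")
  case True
  then have "c * fs\<^sup>2 \<le> c * f\<^sup>2"
    using assms(1,2) by (intro mult_left_mono power_mono) auto
  also have "\<dots> \<le> d"
    using assms(3) True \<open>fs \<le> f\<close> by (auto simp: pipe_law_relaxed_def)
  finally show ?thesis using True by simp
next
  case False
  then show ?thesis using assms(1) by (auto simp: sgn_if)
qed

lemma pos_part_pipe_law_strict_mono:
  assumes "0 < c" "0 \<le> fs" "fs < f" "pipe_law_relaxed c f d"
  shows "max (c * sgn fs * fs\<^sup>2) 0 < max d 0"
proof -
  have "0 \<le> c * fs\<^sup>2" using assms(1) by simp
  have "c * sgn fs * fs\<^sup>2 = c * fs\<^sup>2"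
    using assms(2) by (cases "fs = 0") auto
  also have "\<dots> < c * f\<^sup>2"
    using assms(1-3) by (intro mult_strict_left_mono power_strict_mono) auto
  also have "\<dots> \<le> d"
    using assms(2-4) by (auto simp: pipe_law_relaxed_def)
  finally show ?thesis
    using \<open>c * sgn fs * fs\<^sup>2 = c * fs\<^sup>2\<close> \<open>0 \<le> c * fs\<^sup>2\<close> by linarith
qed

lemma sum_abs_eq_twice_sum_pos_part:
  fixes x :: "'i \<Rightarrow> real"
  assumes "sum x I = 0"
  shows "(\<Sum>i\<in>I. \<bar>x i\<bar>) = 2 * (\<Sum>i\<in>I. max (x i) 0)"
proof -
  have "(\<Sum>i\<in>I. \<bar>x i\<bar>) = (\<Sum>i\<in>I. 2 * max (x i) 0 - x i)"
    by (rule sum.cong) auto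
  also have "\<dots> = 2 * (\<Sum>i\<in>I. max (x i) 0)"
    using assms by (simp add: sum_subtractf sum_distrib_left)
  finally show ?thesis .
qed

text \<open>Read I as the edges of a cycle, oriented along it: f and d are the flows and drops of a
  relaxed solution, fs and ds those of an exact one, and t is the circulation by which the flows
  differ.\<close>

lemma shifted_flows_abs_sum_mono_nonneg:
  fixes f fs d ds c :: "'i \<Rightarrow> real"
  assumes "finite I" "I \<noteq> {}" and c: "\<And>i. i \<in> I \<Longrightarrow> 0 < c i" and "0 \<le> t"
    and shift: "\<And>i. i \<in> I \<Longrightarrow> f i = fs i + t"
    and "sum d I = 0" "sum ds I = 0"
    and relaxed: "\<And>i. i \<in> I \<Longrightarrow> pipe_law_relaxed (c i) (f i) (d i)"
    and exact: "\<And>i. i \<in> I \<Longrightarrow> ds i = c i * sgn (fs i) * (fs i)\<^sup>2"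
  shows "(\<Sum>i\<in>I. \<bar>ds i\<bar>) \<le> (\<Sum>i\<in>I. \<bar>d i\<bar>) \<and> (0 < t \<longrightarrow> (\<Sum>i\<in>I. \<bar>ds i\<bar>) < (\<Sum>i\<in>I. \<bar>d i\<bar>))"
proof -
  have pos_le: "max (ds i) 0 \<le> max (d i) 0" if "i \<in> I" for i
    using pos_part_pipe_law_mono[of "c i" "fs i" "f i" "d i"] c shift relaxed exact that \<open>0 \<le> t\<close>
    by fastforce
  have "(\<Sum>i\<in>I. max (ds i) 0) < (\<Sum>i\<in>I. max (d i) 0)" if "0 < t"
  proof -
    have "\<not> (\<forall>i\<in>I. ds i < 0)"
    proof
      assume "\<forall>i\<in>I. ds i < 0"
      then have "sum ds I < sum (\<lambda>_. 0) I"
        using \<open>finite I\<close> \<open>I \<noteq> {}\<close> by (intro sum_strict_mono) auto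
      with \<open>sum ds I = 0\<close> show False by simp
    qed
    then obtain i where "i \<in> I" "0 \<le> ds i" by (auto simp: not_less)
    moreover have "ds i < 0" if "i \<in> I" "fs i < 0"
      using c[of i] exact[of i] that by (simp add: mult_pos_pos)
    ultimately have "0 \<le> fs i" by (meson not_le)
    have "max (ds i) 0 < max (d i) 0"
      using pos_part_pipe_law_strict_mono[of "c i" "fs i" "f i" "d i"] c shift relaxed exact
        \<open>i \<in> I\<close> \<open>0 \<le> fs i\<close> \<open>0 < t\<close> by fastforce
    then show ?thesis
      using pos_le \<open>finite I\<close> \<open>i \<in> I\<close> by (intro sum_strict_mono_ex1) auto
  qed
  moreover have "(\<Sum>i\<in>I. max (ds i) 0) \<le> (\<Sum>i\<in>I. max (d i) 0)"
    using pos_le by (rule sum_mono)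
  ultimately show ?thesis
    using sum_abs_eq_twice_sum_pos_part[OF \<open>sum d I = 0\<close>]
      sum_abs_eq_twice_sum_pos_part[OF \<open>sum ds I = 0\<close>] by auto
qed

lemma shifted_flows_abs_sum_mono:
  fixes f fs d ds c :: "'i \<Rightarrow> real"
  assumes "finite I" "I \<noteq> {}" and c: "\<And>i. i \<in> I \<Longrightarrow> 0 < c i"
    and shift: "\<And>i. i \<in> I \<Longrightarrow> f i = fs i + t"
    and "sum d I = 0" "sum ds I = 0"
    and relaxed: "\<And>i. i \<in> I \<Longrightarrow> pipe_law_relaxed (c i) (f i) (d i)"
    and exact: "\<And>i. i \<in> I \<Longrightarrow> ds i = c i * sgn (fs i) * (fs i)\<^sup>2"
  shows "(\<Sum>i\<in>I. \<bar>ds i\<bar>) \<le> (\<Sum>i\<in>I. \<bar>d i\<bar>) \<and> (t \<noteq> 0 \<longrightarrow> (\<Sum>i\<in>I. \<bar>ds i\<bar>) < (\<Sum>i\<in>I. \<bar>d i\<bar>))"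
proof (cases "0 \<le> t")
  case True
  then show ?thesis
    using shifted_flows_abs_sum_mono_nonneg[OF assms(1-3) True shift assms(5,6) relaxed exact]
    by auto
next
  case False
  \<comment> \<open>reverse the orientation of every edge\<close>
  have "(\<Sum>i\<in>I. \<bar>- ds i\<bar>) \<le> (\<Sum>i\<in>I. \<bar>- d i\<bar>)
      \<and> (0 < - t \<longrightarrow> (\<Sum>i\<in>I. \<bar>- ds i\<bar>) < (\<Sum>i\<in>I. \<bar>- d i\<bar>))"
  proof (rule shifted_flows_abs_sum_mono_nonneg[OF assms(1-3),
        where t = "- t" and f = "\<lambda>i. - f i" and fs = "\<lambda>i. - fs i"])
    show "sum (\<lambda>i. - d i) I = 0" "sum (\<lambda>i. - ds i) I = 0"
      using assms(5,6) by (simp_all add: sum_negf)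
    show "pipe_law_relaxed (c i) (- f i) (- d i)" if "i \<in> I" for i
      using relaxed[OF that] pipe_law_relaxed_sign[of "-1"] by simp
  qed (use False shift exact in \<open>auto simp: sgn_minus\<close>)
  then show ?thesis using False by simp
qed

locale flow_comparison =
  fixes src dst :: "'e::finite \<Rightarrow> 'n::finite" and Pa :: "'e set" and a :: "'e \<Rightarrow> real"
    and phi phis :: "'e \<Rightarrow> real" and psi psis :: "'n \<Rightarrow> real"
  assumes no_loops: "\<And>l. src l \<noteq> dst l"
    and compressors_off_cycles: "\<And>l. l \<in> Pa \<Longrightarrow> \<not> on_cycle src dst l"
    and cycles_disjoint: "\<And>l C C'. cycle_edge_set src dst C \<Longrightarrow> l \<in> C \<Longrightarrow>
      cycle_edge_set src dst C' \<Longrightarrow> l \<in> C' \<Longrightarrow> C = C'"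
    and a_pos: "\<And>l. l \<notin> Pa \<Longrightarrow> 0 < a l"
    and circ: "circulation src dst (\<lambda>l. phi l - phis l)"
    and exact: "\<And>l. l \<notin> Pa \<Longrightarrow> psis (src l) - psis (dst l) = a l * sgn (phis l) * (phis l)\<^sup>2"
    and relaxed: "\<And>l. l \<notin> Pa \<Longrightarrow> pipe_law_relaxed (a l) (phi l) (psi (src l) - psi (dst l))"
begin

abbreviation pot_drop :: "('n \<Rightarrow> real) \<Rightarrow> 'e \<Rightarrow> real" where
  "pot_drop p l \<equiv> p (src l) - p (dst l)"

lemma flow_eq_off_cycles: "\<not> on_cycle src dst l \<Longrightarrow> phi l = phis l"
  using circulation_zero_off_cycles[OF no_loops circ] by simp

lemma pipe_drop_dominates:
  assumes "l \<notin> Pa" "phi l = phis l"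
  shows "\<bar>pot_drop psis l\<bar> \<le> \<bar>pot_drop psi l\<bar> \<and>
    (\<bar>pot_drop psis l\<bar> = \<bar>pot_drop psi l\<bar> \<longrightarrow> pot_drop psi l = pot_drop psis l)"
  using pipe_law_relaxed_dominates[of "a l" "phi l" "pot_drop psi l"] a_pos[of l] exact[of l]
    relaxed[of l] assms by auto

lemma cycle_drops_dominate:
  assumes "cycle_edge_set src dst C"
  shows "(\<Sum>l\<in>C. \<bar>pot_drop psis l\<bar>) \<le> (\<Sum>l\<in>C. \<bar>pot_drop psi l\<bar>) \<and>
    ((\<Sum>l\<in>C. \<bar>pot_drop psis l\<bar>) = (\<Sum>l\<in>C. \<bar>pot_drop psi l\<bar>) \<longrightarrow> (\<forall>l\<in>C. phi l = phis l))"
proof -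
  obtain es vs where cyc: "is_cycle src dst es vs" and C: "C = set es"
    using assms unfolding cycle_edge_set_def by blast
  define K where "K = length es"
  define ori where "ori = orient src es vs"
  have "0 < K"
    using cyc unfolding is_cycle_def K_def by auto
  have ori: "ori i = 1 \<or> ori i = -1" for i
    unfolding ori_def by (rule orient_cases)
  have pipe: "es ! i \<notin> Pa" if "i < K" for i
    using compressors_off_cycles[of "es ! i"] assms nth_mem[of i es] that
    unfolding C K_def on_cycle_def by blast
  define t where "t = ori (K - 1) * (phi (es ! (K - 1)) - phis (es ! (K - 1)))"
  have shift: "ori i * phi (es ! i) = ori i * phis (es ! i) + t" if "i < K" for i
    using circulation_constant_on_cycle[OF no_loops circ cycles_disjoint cyc, where j = i] that
    unfolding t_def ori_def K_def by (simp add: algebra_simps)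
  have sum_abs: "(\<Sum>l\<in>C. \<bar>pot_drop p l\<bar>) = (\<Sum>i<K. \<bar>ori i * pot_drop p (es ! i)\<bar>)" for p
    using cycle_sum_abs_oriented[OF cyc] unfolding C K_def ori_def .
  have "(\<Sum>i<K. \<bar>ori i * pot_drop psis (es ! i)\<bar>) \<le> (\<Sum>i<K. \<bar>ori i * pot_drop psi (es ! i)\<bar>) \<and>
    (t \<noteq> 0 \<longrightarrow> (\<Sum>i<K. \<bar>ori i * pot_drop psis (es ! i)\<bar>) < (\<Sum>i<K. \<bar>ori i * pot_drop psi (es ! i)\<bar>))"
  proof (rule shifted_flows_abs_sum_mono[where c = "\<lambda>i. a (es ! i)"
        and f = "\<lambda>i. ori i * phi (es ! i)" and fs = "\<lambda>i. ori i * phis (es ! i)"])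
    show "(\<Sum>i<K. ori i * pot_drop psi (es ! i)) = 0" "(\<Sum>i<K. ori i * pot_drop psis (es ! i)) = 0"
      using cycle_oriented_diff_sum[OF cyc] unfolding ori_def K_def by blast+
    show "pipe_law_relaxed (a (es ! i)) (ori i * phi (es ! i)) (ori i * pot_drop psi (es ! i))"
      if "i \<in> {..<K}" for i
      using relaxed[OF pipe] that by (simp add: pipe_law_relaxed_sign[OF ori])
    show "ori i * pot_drop psis (es ! i)
        = a (es ! i) * sgn (ori i * phis (es ! i)) * (ori i * phis (es ! i))\<^sup>2"
      if "i \<in> {..<K}" for i
      using exact[OF pipe] ori[of i] that by (auto simp: sgn_minus)
    show "0 < a (es ! i)" if "i \<in> {..<K}" for i
      using a_pos pipe that by simp
    show "ori i * phi (es ! i) = ori i * phis (es ! i) + t" if "i \<in> {..<K}" for i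
      using shift that by simp
    show "{..<K} \<noteq> {}" using \<open>0 < K\<close> by auto
  qed simp
  then have "(\<Sum>l\<in>C. \<bar>pot_drop psis l\<bar>) \<le> (\<Sum>l\<in>C. \<bar>pot_drop psi l\<bar>)"
    and "t \<noteq> 0 \<Longrightarrow> (\<Sum>l\<in>C. \<bar>pot_drop psis l\<bar>) < (\<Sum>l\<in>C. \<bar>pot_drop psi l\<bar>)"
    unfolding sum_abs by auto
  moreover have "phi l = phis l" if "t = 0" "l \<in> C" for l
  proof -
    obtain i where "i < K" "l = es ! i"
      using \<open>l \<in> C\<close> unfolding C K_def by (auto simp: in_set_conv_nth)
    then show ?thesis using shift[of i] ori[of i] \<open>t = 0\<close> by auto
  qed
  ultimately show ?thesis by force
qed

lemma flow_eq_if_objective_le: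
  assumes "G2_obj src dst Pa psi \<le> G2_obj src dst Pa psis"
  shows "phi = phis"
proof -
  define B where
    "B = {C. cycle_edge_set src dst C} \<union> (\<lambda>l. {l}) ` {l. l \<notin> Pa \<and> \<not> on_cycle src dst l}"
  have block_dominates: "(\<Sum>l\<in>C. \<bar>pot_drop psis l\<bar>) \<le> (\<Sum>l\<in>C. \<bar>pot_drop psi l\<bar>) \<and>
      ((\<Sum>l\<in>C. \<bar>pot_drop psis l\<bar>) = (\<Sum>l\<in>C. \<bar>pot_drop psi l\<bar>) \<longrightarrow> (\<forall>l\<in>C. phi l = phis l))"
    if "C \<in> B" for C
    using that cycle_drops_dominate pipe_drop_dominates flow_eq_off_cycles unfolding B_def by auto
  have "\<Union>B = - Pa"
    using compressors_off_cycles unfolding B_def on_cycle_def by auto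
  moreover have "\<forall>C\<in>B. \<forall>C'\<in>B. C \<noteq> C' \<longrightarrow> C \<inter> C' = {}"
    using cycles_disjoint unfolding B_def on_cycle_def by auto
  ultimately have obj: "G2_obj src dst Pa p = (\<Sum>C\<in>B. \<Sum>l\<in>C. \<bar>pot_drop p l\<bar>)" for p
    unfolding G2_obj_def using sum.Union_disjoint[of B] by (simp add: comp_def)
  have "(\<Sum>l\<in>C. \<bar>pot_drop psis l\<bar>) = (\<Sum>l\<in>C. \<bar>pot_drop psi l\<bar>)" if "C \<in> B" for C
  proof (rule sum_mono_inv[OF _ _ that])
    show "(\<Sum>C\<in>B. \<Sum>l\<in>C. \<bar>pot_drop psis l\<bar>) = (\<Sum>C\<in>B. \<Sum>l\<in>C. \<bar>pot_drop psi l\<bar>)"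
      using antisym[OF sum_mono assms[unfolded obj]] block_dominates by blast
  qed (use block_dominates in auto)
  then have "phi l = phis l" if "on_cycle src dst l" for l
    using that block_dominates unfolding B_def on_cycle_def by blast
  then show ?thesis
    using flow_eq_off_cycles by blast
qed

lemma drops_eq_if_objective_le:
  assumes "G2_obj src dst Pa psi \<le> G2_obj src dst Pa psis" "l \<notin> Pa"
  shows "pot_drop psi l = pot_drop psis l"
proof -
  have dominates: "\<bar>pot_drop psis l\<bar> \<le> \<bar>pot_drop psi l\<bar> \<and>
      (\<bar>pot_drop psis l\<bar> = \<bar>pot_drop psi l\<bar> \<longrightarrow> pot_drop psi l = pot_drop psis l)" if "l \<notin> Pa" for l
    using pipe_drop_dominates[OF that] flow_eq_if_objective_le[OF assms(1)] by simp
  have "\<bar>pot_drop psis l\<bar> = \<bar>pot_drop psi l\<bar>"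
  proof (rule sum_mono_inv[of "\<lambda>l. \<bar>pot_drop psis l\<bar>" "- Pa"])
    show "(\<Sum>l\<in>- Pa. \<bar>pot_drop psis l\<bar>) = (\<Sum>l\<in>- Pa. \<bar>pot_drop psi l\<bar>)"
      using antisym[OF sum_mono assms(1)[unfolded G2_obj_def]] dominates by blast
  qed (use dominates assms(2) in auto)
  then show ?thesis using dominates assms(2) by blast
qed

end

lemma G1_imp_G2_feasible:
  assumes "G1 src dst Pa r psi_r q a alpha phi psi" and a_pos: "\<And>l. l \<notin> Pa \<Longrightarrow> 0 < a l"
    and M: "\<And>l. l \<notin> Pa \<Longrightarrow> \<bar>phi l\<bar> + 2 * a l * (phi l)\<^sup>2 \<le> M"
  shows "G2_feasible src dst Pa r psi_r q a alpha M phi psi (\<lambda>l. 0 \<le> phi l)"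
  using assms(1) pipe_law_imp_big_M_pipe[OF less_imp_le[OF a_pos] M]
  unfolding G1_def G2_feasible_def big_M_pipe_def by blast

lemma G2_feasible_imp_pipe_law_relaxed:
  assumes "G2_feasible src dst Pa r psi_r q a alpha M phi psi x" "l \<notin> Pa"
  shows "pipe_law_relaxed (a l) (phi l) (psi (src l) - psi (dst l))"
  using assms big_M_pipe_imp_relaxed[of M "x l"] unfolding G2_feasible_def big_M_pipe_def by blast

lemma circulation_diff:
  assumes "\<And>v. incT src dst phi v = q v" "\<And>v. incT src dst phi' v = q v"
  shows "circulation src dst (\<lambda>l. phi l - phi' l)"
  using assms unfolding circulation_def incT_def by (simp add: sum_subtractf right_diff_distrib)

lemma connected_graph_eqI:
  assumes "connected_graph src dst" "p r = p' r"
    and edge: "\<And>l. p (src l) = p' (src l) \<longleftrightarrow> p (dst l) = p' (dst l)"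
  shows "p = p'"
proof
  fix v
  have "(r, v) \<in> {(u, w). \<exists>l. joins src dst l u w}\<^sup>*"
    using assms(1) unfolding connected_graph_def by blast
  then show "p v = p' v"
    by induction (use assms(2) edge in \<open>auto simp: joins_def\<close>)
qed

lemma G2_minimizer_eq_G1_solution:
  fixes src dst :: "'e::finite \<Rightarrow> 'n::finite"
  assumes no_loops: "\<And>l. src l \<noteq> dst l" and conn: "connected_graph src dst"
    and compressors_off_cycles: "\<And>l. l \<in> Pa \<Longrightarrow> \<not> on_cycle src dst l"
    and cycles_disjoint: "\<And>l C C'. cycle_edge_set src dst C \<Longrightarrow> l \<in> C \<Longrightarrow>
      cycle_edge_set src dst C' \<Longrightarrow> l \<in> C' \<Longrightarrow> C = C'"
    and a_pos: "\<And>l. l \<notin> Pa \<Longrightarrow> 0 < a l" and alpha_pos: "\<And>l. l \<in> Pa \<Longrightarrow> 0 < alpha l"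
    and sol: "G1 src dst Pa r psi_r q a alpha phis psis"
    and M: "\<And>l. l \<notin> Pa \<Longrightarrow> \<bar>phis l\<bar> + 2 * a l * (phis l)\<^sup>2 \<le> M"
    and min: "G2_minimizer src dst Pa r psi_r q a alpha M phi psi x"
  shows "phi = phis \<and> psi = psis"
proof -
  have feas: "G2_feasible src dst Pa r psi_r q a alpha M phi psi x"
    and obj: "G2_obj src dst Pa psi \<le> G2_obj src dst Pa psis"
    using min G1_imp_G2_feasible[OF sol a_pos M] unfolding G2_minimizer_def by blast+
  interpret flow_comparison src dst Pa a phi phis psi psis
  proof
    show "circulation src dst (\<lambda>l. phi l - phis l)"
      using feas sol by (intro circulation_diff) (auto simp: G1_def G2_feasible_def)
    show "psis (src l) - psis (dst l) = a l * sgn (phis l) * (phis l)\<^sup>2" if "l \<notin> Pa" for l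
      using sol that by (simp add: G1_def)
    show "pipe_law_relaxed (a l) (phi l) (psi (src l) - psi (dst l))" if "l \<notin> Pa" for l
      using G2_feasible_imp_pipe_law_relaxed[OF feas that] .
  qed (fact no_loops compressors_off_cycles cycles_disjoint a_pos)+
  have "psi (src l) = psis (src l) \<longleftrightarrow> psi (dst l) = psis (dst l)" for l
  proof (cases "l \<in> Pa")
    case True
    then show ?thesis
      using feas sol alpha_pos[OF True] by (auto simp: G1_def G2_feasible_def)
  next
    case False
    then show ?thesis using drops_eq_if_objective_le[OF obj] by force
  qed
  then have "psi = psis"
    using feas sol by (intro connected_graph_eqI[OF conn, where r = r]) (auto simp: G1_def G2_feasible_def)
  with flow_eq_if_objective_le[OF obj] show ?thesis by simp
qed

theorem theorem2:
  fixes src dst :: "'e::finite \<Rightarrow> 'n::finite"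
    and Pa :: "'e set" and r :: 'n and psi_r :: real
    and q :: "'n \<Rightarrow> real" and a alpha :: "'e \<Rightarrow> real"
  assumes no_loops: "\<forall>l. src l \<noteq> dst l"
    and conn: "connected_graph src dst"
    and A1: "\<forall>l\<in>Pa. \<not> (\<exists>C. cycle_edge_set src dst C \<and> l \<in> C)"
    and A2: "\<forall>l. \<forall>C C'. cycle_edge_set src dst C \<and> l \<in> C \<and> cycle_edge_set src dst C' \<and> l \<in> C'
                \<longrightarrow> C = C'"
    and q_sum: "(\<Sum>v\<in>UNIV. q v) = 0"
    and a_pos: "\<forall>l. l \<notin> Pa \<longrightarrow> a l > 0"
    and alpha_pos: "\<forall>l\<in>Pa. alpha l > 0"
    and feas: "\<exists>phi psi. G1 src dst Pa r psi_r q a alpha phi psi"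
  shows "\<exists>M0. \<forall>M \<ge> M0. \<forall>phi psi x.
           G2_minimizer src dst Pa r psi_r q a alpha M phi psi x \<longrightarrow>
           G1 src dst Pa r psi_r q a alpha phi psi"
proof -
  obtain phis psis where sol: "G1 src dst Pa r psi_r q a alpha phis psis"
    using feas by blast
  define M0 where "M0 = (\<Sum>l\<in>- Pa. \<bar>phis l\<bar> + 2 * a l * (phis l)\<^sup>2)"
  have M0: "\<bar>phis l\<bar> + 2 * a l * (phis l)\<^sup>2 \<le> M0" if "l \<notin> Pa" for l
    unfolding M0_def using that a_pos by (intro member_le_sum) auto
  have "phi = phis \<and> psi = psis"
    if "M0 \<le> M" "G2_minimizer src dst Pa r psi_r q a alpha M phi psi x" for M phi psi x
  proof (rule G2_minimizer_eq_G1_solution[OF _ conn _ _ _ _ sol _ that(2)])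
    show "\<And>l. l \<notin> Pa \<Longrightarrow> \<bar>phis l\<bar> + 2 * a l * (phis l)\<^sup>2 \<le> M"
      using M0 that(1) by fastforce
  qed (use no_loops A1 A2 a_pos alpha_pos in \<open>auto simp: on_cycle_def\<close>)
  then show ?thesis using sol by blast
qed

end
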